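(* Let $G$ be an instance of the rank-maximal matchings problem (with last-resort posts added, as described in the context), let $M$ be a rank-maximal matching in $G$, and let $G_M$ be the switching graph of $M$. If $T$ is a switching path in $G_M$, then $M\cdot T$ is a rank-maximal matching in $G$. Likewise, if $C$ is a switching cycle in $G_M$, then $M\cdot C$ is a rank-maximal matching in $G$.
   Context: An instance is a bipartite graph $G=(\mathcal{A}\cup\mathcal{P},E)$, $\mathcal{A}$ a set of applicants, $\mathcal{P}$ a set of posts, with $E=E_1\cup\dots\cup E_r$ a disjoint union; $(a,p)\in E_i$ means $p$ is an $i$-th choice of $a$, written $\mathrm{rank}(a,p)=i$ (an applicant may rank several posts equally). Each applicant $a$ is additionally given its own dummy last-resort post $\ell(a)$ (adjacent only to $a$) with $(a,\ell(a))\in E_{r+1}$; the resulting instance with ranks $1,\dots,r+1$ is still called $G$. The signature of a matching $M$ is $(x_1,\dots,x_{r+1})$, where $x_i$ is the number of applicants matched by $M$ along a rank-$i$ edge; signatures are compared lexicographically, and $M$ is rank-maximal if its signature is maximum. For a matched vertex $u$, $M(u)$ is its partner. Even/odd/unreachable: given a bipartite graph and a maximum matching $N$ in it, a vertex is even (resp. odd) if there is an even (resp. odd) length $N$-alternating path from an $N$-unmatched vertex to it, and unreachable otherwise; these sets do not depend on the choice of maximum matching. Irving et al.'s algorithm: let $G'_1=(\mathcal{A}\cup\mathcal{P},E_1)$ and $M_1$ a maximum matching of $G'_1$. For $i=1,\dots,r$: (1) let $\mathcal{E}_i,\mathcal{O}_i,\mathcal{U}_i$ be the even, odd, unreachable vertices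 of $G'_i$; (2) delete all edges of rank $>i$ incident to vertices of $\mathcal{O}_i\cup\mathcal{U}_i$; (3) delete from $G'_i$ all edges joining a vertex of $\mathcal{O}_i$ to a vertex of $\mathcal{O}_i\cup\mathcal{U}_i$; (4) add the remaining edges of $E_{i+1}$ to get $G'_{i+1}$; (5) let $M_{i+1}$ be a maximum matching of $G'_{i+1}$ obtained by augmenting $M_i$. Let $\mathcal{E}_{r+1},\mathcal{O}_{r+1},\mathcal{U}_{r+1}$ be the even, odd, unreachable vertices of $G'_{r+1}$, and let the reduced graph $G'$ be $G'_{r+1}$ minus all edges joining $\mathcal{O}_{r+1}$ to $\mathcal{O}_{r+1}\cup\mathcal{U}_{r+1}$. These graphs and vertex sets do not depend on the choices made. Switching graph: for a rank-maximal matching $M$ (which matches every applicant), $G_M$ is the directed weighted graph with vertex set $\mathcal{P}$ and an edge $(p_i,p_j)$ whenever there is an applicant $a$ with $(a,p_i)\in M$ and $(a,p_j)$ an edge of $G'$, of weight $w(p_i,p_j)=\mathrm{rank}(a,p_j)-\mathrm{rank}(a,p_i)$. A sink is a post with no outgoing edge in $G_M$ that lies in $\mathcal{E}_1\cap\dots\cap\mathcal{E}_{r+1}$. The weight of a path or cycle is the sum of its edge weights. A switching path is a directed path $T=\langle p_0,\dots,p_{k-1}\rangle$ in $G_M$ ending in a sink with $w(T)=0$; a switching cycle is a directed cycle $C=\langle p_0,\dots,p_{k-1},p_0\rangle$ with $w(C)=0$. For a switching path $T$ with $a_i=M(p_i)$ ($0\le i\le k-2$), $M\cdot T$ is the matching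 in which $a_i$ is matched to $p_{i+1}$ and every other applicant keeps its $M$-partner; $M\cdot C$ is defined analogously ($M(p_i)$ gets $p_{i+1}$, indices mod $k$). *)

theory Defs
  imports Main
begin

definition is_matching :: "('a \<times> 'q) set \<Rightarrow> bool" where
  "is_matching M \<longleftrightarrow> (\<forall>a q a' q'. (a,q) \<in> M \<longrightarrow> (a',q') \<in> M \<longrightarrow> (a = a' \<longleftrightarrow> q = q'))"

definition matched_in :: "('a \<times> 'q) set \<Rightarrow> 'a + 'q \<Rightarrow> bool" where
  "matched_in N v \<longleftrightarrow> (case v of Inl a \<Rightarrow> (\<exists>q. (a,q) \<in> N) | Inr q \<Rightarrow> (\<exists>a. (a,q) \<in> N))"

definition uedge :: "('a \<times> 'q) set \<Rightarrow> 'a + 'q \<Rightarrow> 'a + 'q \<Rightarrow> bool" where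
  "uedge F u v \<longleftrightarrow> (case (u, v) of
      (Inl a, Inr q) \<Rightarrow> (a,q) \<in> F
    | (Inr q, Inl a) \<Rightarrow> (a,q) \<in> F
    | _ \<Rightarrow> False)"

definition max_matching :: "('a \<times> 'q) set \<Rightarrow> ('a \<times> 'q) set \<Rightarrow> bool" where
  "max_matching F N \<longleftrightarrow> N \<subseteq> F \<and> is_matching N \<and>
     (\<forall>N'. N' \<subseteq> F \<longrightarrow> is_matching N' \<longrightarrow> card N' \<le> card N)"

definition alt_path :: "('a + 'q) set \<Rightarrow> ('a \<times> 'q) set \<Rightarrow> ('a \<times> 'q) set \<Rightarrow> ('a + 'q) list \<Rightarrow> bool" where
  "alt_path V F N vs \<longleftrightarrow> vs \<noteq> [] \<and> distinct vs \<and> set vs \<subseteq> V \<and>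
     (\<forall>i. Suc i < length vs \<longrightarrow>
        uedge F (vs ! i) (vs ! Suc i) \<and> (uedge N (vs ! i) (vs ! Suc i) \<longleftrightarrow> odd i))"

definition even_wrt :: "('a + 'q) set \<Rightarrow> ('a \<times> 'q) set \<Rightarrow> ('a \<times> 'q) set \<Rightarrow> ('a + 'q) set" where
  "even_wrt V F N = {v \<in> V. \<exists>vs. alt_path V F N vs \<and> \<not> matched_in N (hd vs) \<and>
                          last vs = v \<and> even (length vs - 1)}"

definition odd_wrt :: "('a + 'q) set \<Rightarrow> ('a \<times> 'q) set \<Rightarrow> ('a \<times> 'q) set \<Rightarrow> ('a + 'q) set" where
  "odd_wrt V F N = {v \<in> V. \<exists>vs. alt_path V F N vs \<and> \<not> matched_in N (hd vs) \<and>
                          last vs = v \<and> odd (length vs - 1)}"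

text \<open>Even / odd / unreachable vertices of the graph (V,F), computed w.r.t. some maximum
  matching (they do not depend on the choice).\<close>
definition evens :: "('a + 'q) set \<Rightarrow> ('a \<times> 'q) set \<Rightarrow> ('a + 'q) set" where
  "evens V F = even_wrt V F (SOME N. max_matching F N)"

definition odds :: "('a + 'q) set \<Rightarrow> ('a \<times> 'q) set \<Rightarrow> ('a + 'q) set" where
  "odds V F = odd_wrt V F (SOME N. max_matching F N)"

definition unreach :: "('a + 'q) set \<Rightarrow> ('a \<times> 'q) set \<Rightarrow> ('a + 'q) set" where
  "unreach V F = V - evens V F - odds V F"

definition incident :: "('a + 'q) set \<Rightarrow> 'a \<times> 'q \<Rightarrow> bool" where
  "incident S e \<longleftrightarrow> Inl (fst e) \<in> S \<or> Inr (snd e) \<in> S"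

definition joins_OOU :: "('a + 'q) set \<Rightarrow> ('a + 'q) set \<Rightarrow> 'a \<times> 'q \<Rightarrow> bool" where
  "joins_OOU Odd Unr e \<longleftrightarrow>
     (Inl (fst e) \<in> Odd \<and> Inr (snd e) \<in> Odd \<union> Unr) \<or> (Inr (snd e) \<in> Odd \<and> Inl (fst e) \<in> Odd \<union> Unr)"

text \<open>Generic instance: vertex set V, edge set E, rank function rk.
  irving_stage V E rk n = (G'_(n+1), remaining not yet added edges).\<close>
primrec irving_stage :: "('a + 'q) set \<Rightarrow> ('a \<times> 'q) set \<Rightarrow> ('a \<Rightarrow> 'q \<Rightarrow> nat) \<Rightarrow> nat
    \<Rightarrow> ('a \<times> 'q) set \<times> ('a \<times> 'q) set" where
  "irving_stage V E rk 0 =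
     ({e \<in> E. case_prod rk e = 1}, {e \<in> E. case_prod rk e > 1})"
| "irving_stage V E rk (Suc n) =
     (let F = fst (irving_stage V E rk n);
          Rm = snd (irving_stage V E rk n);
          i = Suc n;
          Odd = odds V F;
          Unr = unreach V F;
          Rm' = {e \<in> Rm. \<not> (case_prod rk e > i \<and> incident (Odd \<union> Unr) e)};
          F' = {e \<in> F. \<not> joins_OOU Odd Unr e}
      in (F' \<union> {e \<in> Rm'. case_prod rk e = Suc i}, {e \<in> Rm'. case_prod rk e > Suc i}))"

text \<open>G'_i for i \<ge> 1\<close>
definition Gprime :: "('a + 'q) set \<Rightarrow> ('a \<times> 'q) set \<Rightarrow> ('a \<Rightarrow> 'q \<Rightarrow> nat) \<Rightarrow> nat \<Rightarrow> ('a \<times> 'q) set" where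
  "Gprime V E rk i = fst (irving_stage V E rk (i - 1))"

text \<open>reduced graph G', where R is the largest rank (R = r+1 for the extended instance)\<close>
definition reduced_graph :: "('a + 'q) set \<Rightarrow> ('a \<times> 'q) set \<Rightarrow> ('a \<Rightarrow> 'q \<Rightarrow> nat) \<Rightarrow> nat \<Rightarrow> ('a \<times> 'q) set" where
  "reduced_graph V E rk R =
     {e \<in> Gprime V E rk R. \<not> joins_OOU (odds V (Gprime V E rk R)) (unreach V (Gprime V E rk R)) e}"

definition signature :: "('a \<Rightarrow> 'q \<Rightarrow> nat) \<Rightarrow> ('a \<times> 'q) set \<Rightarrow> nat \<Rightarrow> nat" where
  "signature rk M i = card {e \<in> M. case_prod rk e = i}"

definition lex_less :: "(nat \<Rightarrow> nat) \<Rightarrow> (nat \<Rightarrow> nat) \<Rightarrow> bool" where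
  "lex_less s t \<longleftrightarrow> (\<exists>k. (\<forall>i<k. s i = t i) \<and> s k < t k)"

definition rank_maximal :: "('a \<times> 'q) set \<Rightarrow> ('a \<Rightarrow> 'q \<Rightarrow> nat) \<Rightarrow> ('a \<times> 'q) set \<Rightarrow> bool" where
  "rank_maximal E rk M \<longleftrightarrow> M \<subseteq> E \<and> is_matching M \<and>
     \<not> (\<exists>M'. M' \<subseteq> E \<and> is_matching M' \<and> lex_less (signature rk M) (signature rk M'))"

text \<open>Posts of the extended instance: Inl p for an original post p, Inr a for l(a).\<close>
definition ext_posts :: "'a set \<Rightarrow> 'p set \<Rightarrow> ('p + 'a) set" where
  "ext_posts A P = Inl ` P \<union> Inr ` A"

definition ext_edges :: "'a set \<Rightarrow> ('a \<times> 'p) set \<Rightarrow> ('a \<times> ('p + 'a)) set" where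
  "ext_edges A E = {(a, Inl p) | a p. (a,p) \<in> E} \<union> {(a, Inr a) | a. a \<in> A}"

fun ext_rank :: "nat \<Rightarrow> ('a \<Rightarrow> 'p \<Rightarrow> nat) \<Rightarrow> 'a \<Rightarrow> 'p + 'a \<Rightarrow> nat" where
  "ext_rank r rank a (Inl p) = rank a p"
| "ext_rank r rank a (Inr b) = Suc r"

definition partner :: "('a \<times> 'q) set \<Rightarrow> 'q \<Rightarrow> 'a" where
  "partner M p = (THE a. (a,p) \<in> M)"

definition sw_edge :: "('a \<times> 'q) set \<Rightarrow> ('a \<times> 'q) set \<Rightarrow> 'q \<Rightarrow> 'q \<Rightarrow> bool" where
  "sw_edge M Gr p p' \<longleftrightarrow> (\<exists>a. (a,p) \<in> M \<and> (a,p') \<in> Gr)"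

definition sw_weight :: "('a \<Rightarrow> 'q \<Rightarrow> nat) \<Rightarrow> ('a \<times> 'q) set \<Rightarrow> 'q \<Rightarrow> 'q \<Rightarrow> int" where
  "sw_weight rk M p p' = int (rk (partner M p) p') - int (rk (partner M p) p)"

definition inst_vertices :: "'a set \<Rightarrow> 'q set \<Rightarrow> ('a + 'q) set" where
  "inst_vertices A Q = Inl ` A \<union> Inr ` Q"

definition is_sink :: "'a set \<Rightarrow> 'q set \<Rightarrow> ('a \<times> 'q) set \<Rightarrow> ('a \<Rightarrow> 'q \<Rightarrow> nat) \<Rightarrow> nat
    \<Rightarrow> ('a \<times> 'q) set \<Rightarrow> 'q \<Rightarrow> bool" where
  "is_sink A Q E rk R M p \<longleftrightarrow> p \<in> Q \<and>
     (\<forall>p' \<in> Q. \<not> sw_edge M (reduced_graph (inst_vertices A Q) E rk R) p p') \<and>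
     (\<forall>i \<in> {1..R}. Inr p \<in> evens (inst_vertices A Q) (Gprime (inst_vertices A Q) E rk i))"

definition switching_path :: "'a set \<Rightarrow> 'q set \<Rightarrow> ('a \<times> 'q) set \<Rightarrow> ('a \<Rightarrow> 'q \<Rightarrow> nat) \<Rightarrow> nat
    \<Rightarrow> ('a \<times> 'q) set \<Rightarrow> 'q list \<Rightarrow> bool" where
  "switching_path A Q E rk R M T \<longleftrightarrow>
     T \<noteq> [] \<and> distinct T \<and> set T \<subseteq> Q \<and>
     (\<forall>i. Suc i < length T \<longrightarrow>
        sw_edge M (reduced_graph (inst_vertices A Q) E rk R) (T ! i) (T ! Suc i)) \<and>
     is_sink A Q E rk R M (last T) \<and>
     (\<Sum>i < length T - 1. sw_weight rk M (T ! i) (T ! Suc i)) = 0"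

definition switching_cycle :: "'a set \<Rightarrow> 'q set \<Rightarrow> ('a \<times> 'q) set \<Rightarrow> ('a \<Rightarrow> 'q \<Rightarrow> nat) \<Rightarrow> nat
    \<Rightarrow> ('a \<times> 'q) set \<Rightarrow> 'q list \<Rightarrow> bool" where
  "switching_cycle A Q E rk R M C \<longleftrightarrow>
     C \<noteq> [] \<and> distinct C \<and> set C \<subseteq> Q \<and>
     (\<forall>i < length C.
        sw_edge M (reduced_graph (inst_vertices A Q) E rk R) (C ! i) (C ! ((Suc i) mod length C))) \<and>
     (\<Sum>i < length C. sw_weight rk M (C ! i) (C ! ((Suc i) mod length C))) = 0"

definition apply_path :: "('a \<times> 'q) set \<Rightarrow> 'q list \<Rightarrow> ('a \<times> 'q) set" where
  "apply_path M T =
     (M - {(partner M (T ! i), T ! i) | i. Suc i < length T})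
     \<union> {(partner M (T ! i), T ! Suc i) | i. Suc i < length T}"

definition apply_cycle :: "('a \<times> 'q) set \<Rightarrow> 'q list \<Rightarrow> ('a \<times> 'q) set" where
  "apply_cycle M C =
     (M - {(partner M (C ! i), C ! i) | i. i < length C})
     \<union> {(partner M (C ! i), C ! ((Suc i) mod length C)) | i. i < length C}"

end

theory Submission
  imports Defs
begin

(* Run Irving et al.'s algorithm against the rank-maximal matching M.  By induction on the
   stage, the edges of M of rank at most i form a maximum matching of G'_i and no edge of M is
   ever deleted: every maximum matching covers the odd and unreachable vertices and uses no
   odd-odd or odd-unreachable edge (Gallai-Edmonds), and a larger matching of G'_i could be
   turned into an augmentation of M that keeps covering those vertices of all earlier stages,
   improving the signature of M.  Consequently M lies in the reduced graph G', and every matching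
   X of G' satisfies |X_{<=j}| <= |M_{<=j}| for all j.
   A switching path or cycle moves applicants of M to other posts along edges of G', so M.T is a
   matching of G' with the same applicants; weight 0 means its rank sum equals that of M.  With
   equal size, the rank sum is the sum over j of |X_{>j}|, which are termwise at least |M_{>j}|,
   so all cumulative counts and hence the signatures coincide. *)

definition endpoints :: "'a \<times> 'q \<Rightarrow> ('a + 'q) set" where
  "endpoints e = {Inl (fst e), Inr (snd e)}"

lemma uedge_sym: "uedge F u v = uedge F v u"
  by (auto simp: uedge_def split: sum.splits)

lemma uedge_iff_endpoints: "uedge F u v \<longleftrightarrow> (\<exists>e\<in>F. endpoints e = {u, v})"
  by (cases u; cases v) (force simp: uedge_def endpoints_def doubleton_eq_iff)+

lemma uedge_isl: "uedge F u v \<Longrightarrow> isl u \<noteq> isl v"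
  by (auto simp: uedge_def split: sum.splits)

lemma uedge_mono: "uedge N u v \<Longrightarrow> N \<subseteq> F \<Longrightarrow> uedge F u v"
  by (auto simp: uedge_iff_endpoints)

lemma matched_in_iff_endpoints: "matched_in N v \<longleftrightarrow> (\<exists>e\<in>N. v \<in> endpoints e)"
  by (cases v) (force simp: matched_in_def endpoints_def)+

lemma matched_in_if_uedge: "uedge N u v \<Longrightarrow> matched_in N u"
  by (auto simp: uedge_iff_endpoints matched_in_iff_endpoints)

lemma is_matching_iff_endpoints:
  "is_matching N \<longleftrightarrow> (\<forall>e\<in>N. \<forall>e'\<in>N. endpoints e \<inter> endpoints e' \<noteq> {} \<longrightarrow> e = e')"
  unfolding is_matching_def endpoints_def by fastforce

lemma matching_endpoint_unique:
  "is_matching N \<Longrightarrow> e \<in> N \<Longrightarrow> e' \<in> N \<Longrightarrow> v \<in> endpoints e \<Longrightarrow> v \<in> endpoints e' \<Longrightarrow> e = e'"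
  unfolding is_matching_iff_endpoints by blast

lemma matching_uedge_unique: "is_matching N \<Longrightarrow> uedge N x y \<Longrightarrow> uedge N x z \<Longrightarrow> y = z"
  by (cases x; cases y; cases z) (auto simp: uedge_def is_matching_def)

lemma matching_fst_unique: "is_matching M \<Longrightarrow> (a, q) \<in> M \<Longrightarrow> (a, q') \<in> M \<Longrightarrow> q = q'"
  and matching_snd_unique: "is_matching M \<Longrightarrow> (a, q) \<in> M \<Longrightarrow> (a', q) \<in> M \<Longrightarrow> a = a'"
  unfolding is_matching_def by blast+

lemma matching_subset: "is_matching M \<Longrightarrow> M' \<subseteq> M \<Longrightarrow> is_matching M'"
  unfolding is_matching_def by blast

lemma matching_Un:
  assumes "is_matching A" "is_matching B" "\<And>a q a' q'. (a, q) \<in> A \<Longrightarrow> (a', q') \<in> B \<Longrightarrow> a \<noteq> a' \<and> q \<noteq> q'"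
  shows "is_matching (A \<union> B)"
  unfolding is_matching_def
proof (intro allI impI)
  fix a q a' q' assume e: "(a, q) \<in> A \<union> B" and e': "(a', q') \<in> A \<union> B"
  have "a = a' \<longleftrightarrow> q = q'" if "is_matching X" "(a, q) \<in> X" "(a', q') \<in> X" for X
    using that matching_fst_unique matching_snd_unique by metis
  then show "a = a' \<longleftrightarrow> q = q'" using e e' assms by blast
qed

lemma matching_insert:
  "is_matching M \<Longrightarrow> a \<notin> fst ` M \<Longrightarrow> q \<notin> snd ` M \<Longrightarrow> is_matching (insert (a, q) M)"
  unfolding is_matching_def by (auto simp: image_iff)

lemma matching_insert_disjoint:
  "is_matching M \<Longrightarrow> \<forall>e'\<in>M. endpoints e \<inter> endpoints e' = {} \<Longrightarrow> is_matching (insert e M)"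
  unfolding is_matching_iff_endpoints by (metis Int_commute insertE)

lemma card_fst_matching: "is_matching M \<Longrightarrow> card (fst ` M) = card M"
  by (rule card_image, rule inj_onI) (metis matching_fst_unique prod.collapse)

lemma partner_eq: "is_matching M \<Longrightarrow> (a, p) \<in> M \<Longrightarrow> partner M p = a"
  unfolding partner_def by (rule the_equality) (auto dest: matching_snd_unique)

lemma sw_edge_partner:
  "is_matching M \<Longrightarrow> sw_edge M G p p' \<Longrightarrow> (partner M p, p) \<in> M \<and> (partner M p, p') \<in> G"
  using partner_eq by (fastforce simp: sw_edge_def)

lemma max_matching_exists: "finite F \<Longrightarrow> \<exists>N. max_matching F N"
proof -
  assume "finite F"
  let ?S = "{N. N \<subseteq> F \<and> is_matching N}"
  have fin: "finite (card ` ?S)" using \<open>finite F\<close> by simp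
  have "{} \<in> ?S" by (simp add: is_matching_def)
  then obtain N where "N \<subseteq> F" "is_matching N" and N: "card N = Max (card ` ?S)"
    using Max_in[OF fin] by fastforce
  then show ?thesis
    unfolding max_matching_def using Max_ge[OF fin] by (metis (mono_tags, lifting) image_eqI mem_Collect_eq)
qed

lemma finite_edges_between:
  "finite V \<Longrightarrow> \<forall>e\<in>F. Inl (fst e) \<in> V \<and> Inr (snd e) \<in> V \<Longrightarrow> finite F"
  by (rule finite_subset[of _ "Inl -` V \<times> Inr -` V"]) (force simp: finite_vimageI)+

lemma card_matching_le_transversal:
  assumes "finite C" and "is_matching Y" and meets: "\<forall>e\<in>Y. endpoints e \<inter> C \<noteq> {}"
  shows "card Y \<le> card C"
proof -
  have "\<forall>e\<in>Y. \<exists>c. c \<in> endpoints e \<inter> C" using meets by blast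
  then obtain f where f: "\<And>e. e \<in> Y \<Longrightarrow> f e \<in> endpoints e \<inter> C" by metis
  have "inj_on f Y"
    by (rule inj_onI) (metis f IntD1 matching_endpoint_unique[OF assms(2)])
  moreover have "f ` Y \<subseteq> C" using f by blast
  ultimately show ?thesis using card_inj_on_le assms(1) by blast
qed

lemma card_le_private_edges:
  assumes "finite S" and own: "\<forall>c\<in>C. \<exists>e\<in>S. c \<in> endpoints e \<and> endpoints e \<inter> C = {c}"
  shows "card C \<le> card S"
proof -
  obtain g where g: "\<And>c. c \<in> C \<Longrightarrow> g c \<in> S \<and> c \<in> endpoints (g c) \<and> endpoints (g c) \<inter> C = {c}"
    using own by metis
  have "inj_on g C"
    by (rule inj_onI) (metis g IntI singletonD)
  moreover have "g ` C \<subseteq> S" using g by blast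
  ultimately show ?thesis using card_inj_on_le assms(1) by blast
qed

lemma matching_saturates_transversal:
  assumes "finite C" "finite Y" and Y: "is_matching Y" and meets: "\<forall>e\<in>Y. endpoints e \<inter> C \<noteq> {}"
    and card: "card C \<le> card Y"
  shows "\<forall>c\<in>C. \<exists>e\<in>Y. c \<in> endpoints e"
    and "\<forall>e\<in>Y. \<forall>c\<in>endpoints e \<inter> C. \<forall>c'\<in>endpoints e \<inter> C. c = c'"
proof -
  have "\<forall>e\<in>Y. \<exists>c. c \<in> endpoints e \<inter> C" using meets by blast
  then obtain f where f: "\<And>e. e \<in> Y \<Longrightarrow> f e \<in> endpoints e \<inter> C" by metis
  have "inj_on f Y"
    by (rule inj_onI) (metis f IntD1 matching_endpoint_unique[OF Y])
  moreover have "f ` Y \<subseteq> C" using f by blast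
  ultimately have "f ` Y = C" using card_seteq[OF assms(1)] card card_image by metis
  then show "\<forall>c\<in>C. \<exists>e\<in>Y. c \<in> endpoints e" using f by blast
  have "c = f e" if "e \<in> Y" "c \<in> endpoints e \<inter> C" for e c
    using that \<open>f ` Y = C\<close> f matching_endpoint_unique[OF Y] by (metis IntE imageE)
  then show "\<forall>e\<in>Y. \<forall>c\<in>endpoints e \<inter> C. \<forall>c'\<in>endpoints e \<inter> C. c = c'" by metis
qed

section \<open>Alternating paths and the Gallai--Edmonds decomposition\<close>

lemma alt_path_isl: "alt_path V F N vs \<Longrightarrow> i < length vs \<Longrightarrow> isl (vs ! i) = (isl (vs ! 0) = even i)"
proof (induction i)
  case (Suc i)
  then have "uedge F (vs ! i) (vs ! Suc i)" by (auto simp: alt_path_def)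
  with uedge_isl Suc show ?case by fastforce
qed simp

lemma alt_path_take: "alt_path V F N vs \<Longrightarrow> j < length vs \<Longrightarrow> alt_path V F N (take (Suc j) vs)"
  unfolding alt_path_def by (auto dest: in_set_takeD)

lemma alt_path_singleton: "v \<in> V \<Longrightarrow> alt_path V F N [v]"
  by (simp add: alt_path_def)

lemma alt_path_snoc:
  assumes "alt_path V F N vs" "v \<in> V" "v \<notin> set vs" "uedge F (last vs) v"
    "uedge N (last vs) v \<longleftrightarrow> odd (length vs - 1)"
  shows "alt_path V F N (vs @ [v])"
proof -
  have last: "last vs = vs ! (length vs - 1)"
    using assms(1) by (simp add: alt_path_def last_conv_nth)
  have "uedge F ((vs @ [v]) ! i) ((vs @ [v]) ! Suc i) \<and>
      uedge N ((vs @ [v]) ! i) ((vs @ [v]) ! Suc i) = odd i" if i: "Suc i < length (vs @ [v])" for i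
  proof (cases "Suc i < length vs")
    case True
    then show ?thesis using assms(1) by (simp add: alt_path_def nth_append)
  next
    case False
    then have "i = length vs - 1" "Suc i = length vs" using i by auto
    then show ?thesis using assms(4,5) last by (simp add: nth_append)
  qed
  then show ?thesis using assms(1-3) by (simp add: alt_path_def)
qed

locale max_matching_graph =
  fixes V :: "('a + 'q) set" and F :: "('a \<times> 'q) set" and N :: "('a \<times> 'q) set"
  assumes finite_V: "finite V"
    and edge_in_V: "\<And>e. e \<in> F \<Longrightarrow> Inl (fst e) \<in> V \<and> Inr (snd e) \<in> V"
    and max_N: "max_matching F N"
begin

lemma N_subset: "N \<subseteq> F" and N_matching: "is_matching N"
  and card_matching_le_N: "X \<subseteq> F \<Longrightarrow> is_matching X \<Longrightarrow> card X \<le> card N"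
  using max_N by (auto simp: max_matching_def)

lemma finite_F: "finite F"
  using finite_edges_between finite_V edge_in_V by blast

lemma uedge_in_V: "uedge F u v \<Longrightarrow> v \<in> V"
  by (cases u; cases v) (auto simp: uedge_def dest: edge_in_V)

text \<open>\<open>N'\<close> arises from \<open>N\<close> by switching the first \<open>L\<close> edges of the alternating path \<open>vs\<close>.\<close>

definition prefix_switched :: "('a + 'q) list \<Rightarrow> nat \<Rightarrow> ('a \<times> 'q) set \<Rightarrow> bool" where
  "prefix_switched vs L N' \<longleftrightarrow> is_matching N' \<and> N' \<subseteq> F \<and> card N' = card N \<and>
     (\<forall>v. matched_in N' v \<longrightarrow> matched_in N v \<or> v = vs ! 0) \<and> \<not> matched_in N' (vs ! L) \<and>
     (\<forall>e\<in>N. (\<forall>i\<le>L. vs ! i \<notin> endpoints e) \<longrightarrow> e \<in> N')"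

lemma prefix_switched_step:
  assumes ap: "alt_path V F N vs" and L: "even L" "Suc (Suc L) < length vs"
    and sw: "prefix_switched vs L N'"
  shows "\<exists>N''. prefix_switched vs (Suc (Suc L)) N''"
proof -
  have distinct: "i < length vs \<Longrightarrow> j < length vs \<Longrightarrow> vs ! i = vs ! j \<longleftrightarrow> i = j" for i j
    using ap by (simp add: alt_path_def nth_eq_iff_index_eq)
  have step: "Suc i < length vs \<Longrightarrow> uedge F (vs ! i) (vs ! Suc i) \<and> (uedge N (vs ! i) (vs ! Suc i) \<longleftrightarrow> odd i)" for i
    using ap by (simp add: alt_path_def)
  obtain e1 where e1: "e1 \<in> F" "endpoints e1 = {vs ! L, vs ! Suc L}" "e1 \<notin> N"
    using step[of L] L by (auto simp: uedge_iff_endpoints)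
  obtain e2 where e2: "e2 \<in> N" "endpoints e2 = {vs ! Suc L, vs ! Suc (Suc L)}"
    using step[of "Suc L"] L by (auto simp: uedge_iff_endpoints)
  have N': "is_matching N'" "N' \<subseteq> F" "card N' = card N"
    "\<And>v. matched_in N' v \<Longrightarrow> matched_in N v \<or> v = vs ! 0" "\<not> matched_in N' (vs ! L)"
    "\<And>e. e \<in> N \<Longrightarrow> \<forall>i\<le>L. vs ! i \<notin> endpoints e \<Longrightarrow> e \<in> N'"
    using sw unfolding prefix_switched_def by blast+
  have "e2 \<in> N'"
    using N'(6)[OF e2(1)] e2(2) distinct L(2) by fastforce
  have e1_disjoint: "endpoints e1 \<inter> endpoints z = {}" if "z \<in> N' - {e2}" for z
    using that N'(5) matching_endpoint_unique[OF N'(1) \<open>e2 \<in> N'\<close>, of z "vs ! Suc L"] e1(2) e2(2)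
    by (auto simp: matched_in_iff_endpoints)
  have "e1 \<notin> N'" using N'(5) e1(2) by (auto simp: matched_in_iff_endpoints)
  define N'' where "N'' = insert e1 (N' - {e2})"
  have "is_matching N''"
    unfolding N''_def using matching_insert_disjoint matching_subset[OF N'(1)] e1_disjoint
    by (metis Diff_subset)
  moreover have "N'' \<subseteq> F" using N'(2) e1(1) by (auto simp: N''_def)
  moreover have "card N'' = card N"
  proof -
    have "finite N'" using N'(2) finite_F finite_subset by blast
    then have "0 < card N'" using \<open>e2 \<in> N'\<close> card_gt_0_iff by blast
    then show ?thesis using N'(3) \<open>finite N'\<close> \<open>e1 \<notin> N'\<close> \<open>e2 \<in> N'\<close>
      by (simp add: N''_def card_Diff_singleton)
  qed
  moreover have "matched_in N (vs ! L) \<or> vs ! L = vs ! 0"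
  proof (cases L)
    case (Suc K)
    then have "uedge N (vs ! L) (vs ! K)" using step[of K] L uedge_sym by fastforce
    then show ?thesis using matched_in_if_uedge by blast
  qed simp
  then have "matched_in N'' v \<Longrightarrow> matched_in N v \<or> v = vs ! 0" for v
    using N'(4) e1(2) e2 by (auto simp: N''_def matched_in_iff_endpoints)
  moreover have "\<not> matched_in N'' (vs ! Suc (Suc L))"
    using e1(2) distinct[of "Suc (Suc L)" L] distinct[of "Suc (Suc L)" "Suc L"] L(2)
      matching_endpoint_unique[OF N'(1) \<open>e2 \<in> N'\<close>] e2(2)
    by (auto simp: N''_def matched_in_iff_endpoints)
  moreover have "e \<in> N''" if "e \<in> N" "\<forall>i\<le>Suc (Suc L). vs ! i \<notin> endpoints e" for e
    using that N'(6) e2(2) by (auto simp: N''_def)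
  ultimately show ?thesis unfolding prefix_switched_def by blast
qed

lemma prefix_switched_exists:
  assumes "alt_path V F N vs" "\<not> matched_in N (vs ! 0)" "2 * m < length vs"
  shows "\<exists>N'. prefix_switched vs (2 * m) N'"
  using assms(3)
proof (induction m)
  case 0
  show ?case using assms(2) N_matching N_subset by (auto simp: prefix_switched_def)
next
  case (Suc m)
  then show ?case using prefix_switched_step[OF assms(1), of "2 * m"] by auto
qed

lemma no_augmenting_path:
  assumes ap: "alt_path V F N vs" and hd: "\<not> matched_in N (hd vs)"
    and last: "\<not> matched_in N (last vs)" and odd: "odd (length vs - 1)"
  shows False
proof -
  from odd obtain m where "length vs - 1 = 2 * m + 1" by (rule oddE)
  then have m: "length vs = Suc (Suc (2 * m))" by simp
  have "distinct vs" using ap by (simp add: alt_path_def)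
  have "vs \<noteq> []" using m by auto
  then have hd0: "hd vs = vs ! 0" and last1: "last vs = vs ! Suc (2 * m)"
    using m by (auto simp: hd_conv_nth last_conv_nth)
  obtain N' where "prefix_switched vs (2 * m) N'"
    using prefix_switched_exists[OF ap, of m] hd m hd0 by auto
  then have N': "is_matching N'" "N' \<subseteq> F" "card N' = card N"
    "\<And>v. matched_in N' v \<Longrightarrow> matched_in N v \<or> v = vs ! 0" "\<not> matched_in N' (vs ! (2 * m))"
    unfolding prefix_switched_def by blast+
  have "uedge F (vs ! (2 * m)) (vs ! Suc (2 * m))" using ap m by (simp add: alt_path_def)
  then obtain e where e: "e \<in> F" "endpoints e = {vs ! (2 * m), vs ! Suc (2 * m)}"
    by (auto simp: uedge_iff_endpoints)
  have "vs ! Suc (2 * m) \<noteq> vs ! 0"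
    using \<open>distinct vs\<close> m by (simp add: nth_eq_iff_index_eq)
  then have "\<not> matched_in N' (vs ! Suc (2 * m))" using N'(4) last last1 by metis
  then have "\<forall>e'\<in>N'. endpoints e \<inter> endpoints e' = {}"
    using N'(5) e(2) by (auto simp: matched_in_iff_endpoints)
  then have "is_matching (insert e N')"
    using matching_insert_disjoint[OF N'(1)] by blast
  moreover have "e \<notin> N'" using N'(5) e(2) by (auto simp: matched_in_iff_endpoints)
  moreover have "insert e N' \<subseteq> F" using N'(2) e(1) by simp
  ultimately have "card (insert e N') \<le> card N" using card_matching_le_N by blast
  then show False using \<open>e \<notin> N'\<close> N'(2,3) finite_subset[OF _ finite_F] by simp
qed

abbreviation "Evs \<equiv> even_wrt V F N"
abbreviation "Ods \<equiv> odd_wrt V F N"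
abbreviation "Uns \<equiv> V - Evs - Ods"

lemma odd_imp_matched: "v \<in> Ods \<Longrightarrow> matched_in N v"
  unfolding odd_wrt_def using no_augmenting_path by blast

lemma unmatched_imp_even: "v \<in> V \<Longrightarrow> \<not> matched_in N v \<Longrightarrow> v \<in> Evs"
  unfolding even_wrt_def using alt_path_singleton[of v V F N] by force

lemma alt_path_nth_class:
  assumes ap: "alt_path V F N vs" and hd: "\<not> matched_in N (hd vs)" and j: "j < length vs"
  shows "vs ! j \<in> (if even j then Evs else Ods)"
proof -
  have "alt_path V F N (take (Suc j) vs)" using alt_path_take[OF ap j] .
  moreover have "hd (take (Suc j) vs) = hd vs" using j by (cases vs) auto
  moreover have "last (take (Suc j) vs) = vs ! j" using j by (simp add: take_Suc_conv_app_nth)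
  moreover have "vs ! j \<in> V" using ap j by (auto simp: alt_path_def)
  ultimately show ?thesis
    using hd j unfolding even_wrt_def odd_wrt_def by (auto intro!: exI[of _ "take (Suc j) vs"])
qed

text \<open>The class of a neighbour of the endpoint: if \<open>y\<close> is already on the path, the sides of the
  bipartition fix the parity of its position; otherwise the path can be extended by \<open>y\<close>.\<close>

lemma alt_path_neighbour_class:
  assumes ap: "alt_path V F N vs" and hd: "\<not> matched_in N (hd vs)" and xy: "uedge F (last vs) y"
    and ext: "y \<notin> set vs \<Longrightarrow> uedge N (last vs) y \<longleftrightarrow> odd (length vs - 1)"
  shows "y \<in> (if even (length vs - 1) then Ods else Evs)"
proof (cases "y \<in> set vs")
  case True
  then obtain j where j: "j < length vs" "vs ! j = y" by (auto simp: in_set_conv_nth)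
  have "vs \<noteq> []" using ap by (simp add: alt_path_def)
  then have "last vs = vs ! (length vs - 1)" by (simp add: last_conv_nth)
  then have "even j \<longleftrightarrow> odd (length vs - 1)"
    using alt_path_isl[OF ap j(1)] alt_path_isl[OF ap, of "length vs - 1"] uedge_isl[OF xy] j \<open>vs \<noteq> []\<close>
    by auto
  then show ?thesis using alt_path_nth_class[OF ap hd j(1)] j(2) by auto
next
  case False
  have "y \<in> V" using uedge_in_V[OF xy] .
  have "vs \<noteq> []" using ap by (simp add: alt_path_def)
  have "alt_path V F N (vs @ [y])" using alt_path_snoc[OF ap \<open>y \<in> V\<close> False xy ext[OF False]] .
  moreover have "hd (vs @ [y]) = hd vs" using \<open>vs \<noteq> []\<close> by simp
  ultimately have "y \<in> (if even (length vs) then Evs else Ods)"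
    using alt_path_nth_class[of "vs @ [y]" "length vs"] hd by simp
  then show ?thesis using \<open>vs \<noteq> []\<close> by (cases "length vs") auto
qed

lemma even_neighbour_odd:
  assumes x: "x \<in> Evs" and xy: "uedge F x y"
  shows "y \<in> Ods"
proof -
  obtain vs where ap: "alt_path V F N vs" and hd: "\<not> matched_in N (hd vs)"
    and last: "last vs = x" and even: "even (length vs - 1)"
    using x unfolding even_wrt_def by auto
  have "vs \<noteq> []" using ap by (simp add: alt_path_def)
  have "\<not> uedge N x y" if "y \<notin> set vs"
  proof
    assume xyN: "uedge N x y"
    show False
    proof (cases "length vs - 1")
      case 0
      then have "x = hd vs" using last \<open>vs \<noteq> []\<close> by (simp add: hd_conv_nth last_conv_nth)
      then show False using hd matched_in_if_uedge[OF xyN] by simp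
    next
      case (Suc K)
      then have "uedge N (vs ! K) x"
        using ap last even \<open>vs \<noteq> []\<close> by (auto simp: alt_path_def last_conv_nth)
      then have "y = vs ! K"
        using matching_uedge_unique[OF N_matching xyN] uedge_sym by metis
      then show False using that Suc by simp
    qed
  qed
  then show ?thesis using alt_path_neighbour_class[OF ap hd] xy last even by auto
qed

lemma odd_partner_even:
  assumes x: "x \<in> Ods" and xy: "uedge N x y"
  shows "y \<in> Evs"
proof -
  obtain vs where ap: "alt_path V F N vs" and hd: "\<not> matched_in N (hd vs)"
    and last: "last vs = x" and odd: "odd (length vs - 1)"
    using x unfolding odd_wrt_def by auto
  then show ?thesis
    using alt_path_neighbour_class[OF ap hd] uedge_mono[OF xy N_subset] xy by auto
qed

lemma alt_path_join:
  assumes P: "alt_path V F N P" and Q: "alt_path V F N Q"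
    and k: "k < length P" and l: "l < length Q" and meet: "P ! k = Q ! l"
    and first: "\<forall>i<k. P ! i \<notin> set Q" and parity: "odd (k + l)"
  shows "alt_path V F N (take (Suc k) P @ rev (take l Q))" (is "alt_path V F N ?R")
proof -
  have len: "length ?R = Suc (k + l)" using k l by simp
  have R_P: "?R ! i = P ! i" if "i \<le> k" for i
    using that k by (simp add: nth_append)
  have R_Q: "?R ! i = Q ! (k + l - i)" if "k \<le> i" "i \<le> k + l" for i
    using that k l meet by (cases "i = k") (auto simp: nth_append rev_nth add.commute)
  have "distinct P" "distinct Q" using P Q by (auto simp: alt_path_def)
  have "set (take (Suc k) P) \<inter> set (take l Q) = {}"
  proof (rule equals0I)
    fix z assume "z \<in> set (take (Suc k) P) \<inter> set (take l Q)"
    then obtain i j where i: "i \<le> k" "P ! i = z" and j: "j < l" "Q ! j = z"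
      using k l by (auto simp: in_set_conv_nth less_Suc_eq_le)
    show False
    proof (cases "i = k")
      case True
      then have "Q ! j = Q ! l" using meet i j by simp
      then show False using nth_eq_iff_index_eq[OF \<open>distinct Q\<close>, of j l] j l by simp
    next
      case False
      then show False using first i j l by (metis le_neq_implies_less nth_mem order.strict_trans)
    qed
  qed
  then have "distinct ?R" using \<open>distinct P\<close> \<open>distinct Q\<close> by simp
  moreover have "set ?R \<subseteq> V" using P Q by (auto simp: alt_path_def dest: in_set_takeD)
  moreover have "uedge F (?R ! i) (?R ! Suc i) \<and> (uedge N (?R ! i) (?R ! Suc i) \<longleftrightarrow> odd i)"
    if i: "Suc i < length ?R" for i
  proof (cases "Suc i \<le> k")
    case True
    then show ?thesis using R_P[of i] R_P[of "Suc i"] P k by (simp add: alt_path_def)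
  next
    case False
    define j where "j = k + l - Suc i"
    have "?R ! i = Q ! Suc j" "?R ! Suc i = Q ! j" "Suc j < length Q"
      using R_Q[of i] R_Q[of "Suc i"] False i len l by (simp_all add: j_def Suc_diff_Suc)
    moreover have "odd j \<longleftrightarrow> odd i" using parity False i len by (simp add: j_def)
    ultimately show ?thesis using Q uedge_sym by (metis alt_path_def)
  qed
  moreover have "?R \<noteq> []" using len by (metis Zero_not_Suc list.size(3))
  ultimately show ?thesis unfolding alt_path_def using len by simp
qed

lemma evens_odds_disjoint: "Evs \<inter> Ods = {}"
proof (rule ccontr)
  assume "Evs \<inter> Ods \<noteq> {}"
  then obtain x where "x \<in> Evs" "x \<in> Ods" by blast
  then obtain P Q where
    P: "alt_path V F N P" "\<not> matched_in N (hd P)" "even (length P - 1)" "last P = x" and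
    Q: "alt_path V F N Q" "\<not> matched_in N (hd Q)" "odd (length Q - 1)" "last Q = x"
    unfolding even_wrt_def odd_wrt_def by blast
  have "P \<noteq> []" "Q \<noteq> []" using P(1) Q(1) by (auto simp: alt_path_def)
  then have last_P: "last P = P ! (length P - 1)" and last_Q: "last Q = Q ! (length Q - 1)"
    by (simp_all add: last_conv_nth)
  define k where "k = (LEAST k. k < length P \<and> P ! k \<in> set Q)"
  have "length P - 1 < length P \<and> P ! (length P - 1) \<in> set Q"
    using \<open>P \<noteq> []\<close> \<open>Q \<noteq> []\<close> P(4) Q(4) last_P by (metis diff_less last_in_set length_greater_0_conv zero_less_one)
  then have k: "k < length P" "P ! k \<in> set Q"
    unfolding k_def by (metis (mono_tags, lifting) LeastI)+
  have first: "\<forall>i<k. P ! i \<notin> set Q"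
    using k(1) not_less_Least unfolding k_def by fastforce
  obtain l where l: "l < length Q" "Q ! l = P ! k" using k(2) by (metis in_set_conv_nth)
  have "odd (k + l)"
    using alt_path_isl[OF P(1) k(1)] alt_path_isl[OF Q(1) l(1)]
      alt_path_isl[OF P(1), of "length P - 1"] alt_path_isl[OF Q(1), of "length Q - 1"]
      l(2) P(3,4) Q(3,4) last_P last_Q \<open>P \<noteq> []\<close> \<open>Q \<noteq> []\<close>
    by (smt (verit) diff_less even_add length_greater_0_conv zero_less_one)
  define R where "R = take (Suc k) P @ rev (take l Q)"
  have "alt_path V F N R"
    unfolding R_def by (rule alt_path_join[OF P(1) Q(1) k(1) l(1) l(2)[symmetric] first \<open>odd (k + l)\<close>])
  moreover have "hd R = hd P"
    using \<open>P \<noteq> []\<close> by (simp add: R_def hd_append)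
  moreover have "last R = hd Q"
  proof (cases l)
    case 0
    then show ?thesis using k(1) l(2) \<open>Q \<noteq> []\<close> by (simp add: R_def take_Suc_conv_app_nth hd_conv_nth)
  next
    case (Suc l')
    then show ?thesis using \<open>Q \<noteq> []\<close> by (cases Q) (simp_all add: R_def last_rev)
  qed
  moreover have "length R - 1 = k + l" using k l by (simp add: R_def)
  ultimately show False using no_augmenting_path P(2) Q(2) \<open>odd (k + l)\<close> by metis
qed

text \<open>The odd vertices together with the unreachable vertices of one side form a vertex
  cover of size \<open>card N\<close>; this is the Koenig-type certificate behind the Gallai--Edmonds
  decomposition.\<close>

definition side_cover :: "bool \<Rightarrow> ('a + 'q) set" where
  "side_cover b = Ods \<union> {v \<in> Uns. isl v = b}"

lemma finite_side_cover: "finite (side_cover b)"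
  using finite_V by (rule finite_subset[rotated]) (auto simp: side_cover_def odd_wrt_def)

lemma side_cover_meets_uedge:
  assumes "uedge F u w" and "isl u = b"
  shows "u \<in> side_cover b \<or> w \<in> side_cover b"
proof (cases "u \<in> Evs")
  case True
  then show ?thesis using even_neighbour_odd assms(1) by (auto simp: side_cover_def)
next
  case False
  have "u \<in> V" using uedge_in_V assms(1) uedge_sym by metis
  with False assms(2) show ?thesis by (auto simp: side_cover_def)
qed

lemma side_cover_meets_edge: "e \<in> F \<Longrightarrow> endpoints e \<inter> side_cover b \<noteq> {}"
  using side_cover_meets_uedge[of "Inl (fst e)" "Inr (snd e)" b]
    side_cover_meets_uedge[of "Inr (snd e)" "Inl (fst e)" b]
  by (cases e; cases b) (auto simp: uedge_def endpoints_def)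

lemma matching_uedge_not_inside_side_cover:
  assumes "uedge N u w" "u \<in> side_cover b" "w \<in> side_cover b" "isl u \<noteq> b"
  shows False
proof -
  have "u \<in> Ods" using assms(2,4) by (auto simp: side_cover_def)
  then have "w \<in> Evs" using odd_partner_even assms(1) by blast
  then show False using assms(3) evens_odds_disjoint by (auto simp: side_cover_def)
qed

lemma card_side_cover_le: "card (side_cover b) \<le> card N"
proof (rule card_le_private_edges[OF finite_subset[OF N_subset finite_F]], intro ballI)
  fix c assume c: "c \<in> side_cover b"
  then have "matched_in N c"
    using odd_imp_matched unmatched_imp_even by (auto simp: side_cover_def)
  then obtain e where e: "e \<in> N" "c \<in> endpoints e" by (auto simp: matched_in_iff_endpoints)
  have "\<not> (Inl (fst e) \<in> side_cover b \<and> Inr (snd e) \<in> side_cover b)"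
    using matching_uedge_not_inside_side_cover[of "Inl (fst e)" "Inr (snd e)" b]
      matching_uedge_not_inside_side_cover[of "Inr (snd e)" "Inl (fst e)" b] e(1)
    by (cases e; cases b) (auto simp: uedge_def)
  then have "endpoints e \<inter> side_cover b = {c}" using c e(2) by (auto simp: endpoints_def)
  with e show "\<exists>e\<in>N. c \<in> endpoints e \<and> endpoints e \<inter> side_cover b = {c}" by blast
qed

lemma card_matching_le_side_cover: "X \<subseteq> F \<Longrightarrow> is_matching X \<Longrightarrow> card X \<le> card (side_cover b)"
  using card_matching_le_transversal[OF finite_side_cover] side_cover_meets_edge by blast

lemma max_matching_structure:
  assumes "max_matching F Y"
  shows "\<forall>v\<in>Ods \<union> Uns. matched_in Y v" and "\<forall>e\<in>Y. \<not> joins_OOU Ods Uns e"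
proof -
  have Y: "Y \<subseteq> F" "is_matching Y" "finite Y" "card Y = card N"
    using assms max_N finite_subset[OF _ finite_F] by (auto simp: max_matching_def intro: le_antisym)
  have meets: "\<forall>e\<in>Y. endpoints e \<inter> side_cover b \<noteq> {}" for b
    using side_cover_meets_edge Y(1) by blast
  have card: "card (side_cover b) \<le> card Y" for b using card_side_cover_le Y(4) by simp
  note saturated = matching_saturates_transversal[OF finite_side_cover Y(3,2) meets card]
  show "\<forall>v\<in>Ods \<union> Uns. matched_in Y v"
    using saturated(1) by (fastforce simp: matched_in_iff_endpoints side_cover_def)
  show "\<forall>e\<in>Y. \<not> joins_OOU Ods Uns e"
  proof (intro ballI notI)
    fix e assume "e \<in> Y" "joins_OOU Ods Uns e"
    then obtain b where "Inl (fst e) \<in> side_cover b" "Inr (snd e) \<in> side_cover b"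
      unfolding joins_OOU_def side_cover_def by (metis (mono_tags) Int_iff Un_iff isl_def mem_Collect_eq)
    then show False using saturated(2)[of b] \<open>e \<in> Y\<close> by (auto simp: endpoints_def)
  qed
qed

end

lemma max_matching_graph_SOME:
  assumes "finite V" "\<forall>e\<in>F. Inl (fst e) \<in> V \<and> Inr (snd e) \<in> V"
  shows "max_matching_graph V F (SOME N. max_matching F N)"
  using assms max_matching_exists[OF finite_edges_between[OF assms]]
  by unfold_locales (auto intro: someI_ex)

lemma max_matching_covers_odds_unreach:
  assumes "finite V" "\<forall>e\<in>F. Inl (fst e) \<in> V \<and> Inr (snd e) \<in> V" "max_matching F Y"
  shows "\<forall>v\<in>odds V F \<union> unreach V F. matched_in Y v"
    and "\<forall>e\<in>Y. \<not> joins_OOU (odds V F) (unreach V F) e"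
proof -
  interpret max_matching_graph V F "SOME N. max_matching F N"
    using max_matching_graph_SOME[OF assms(1,2)] .
  show "\<forall>v\<in>odds V F \<union> unreach V F. matched_in Y v" "\<forall>e\<in>Y. \<not> joins_OOU (odds V F) (unreach V F) e"
    using max_matching_structure[OF assms(3)] by (simp_all add: odds_def unreach_def evens_def)
qed

definition left_cover :: "('a + 'q) set \<Rightarrow> ('a \<times> 'q) set \<Rightarrow> ('a + 'q) set" where
  "left_cover V F = odds V F \<union> {v \<in> unreach V F. isl v}"

lemma card_matching_le_left_cover:
  assumes "finite V" "\<forall>e\<in>F. Inl (fst e) \<in> V \<and> Inr (snd e) \<in> V" "X \<subseteq> F" "is_matching X"
  shows "card X \<le> card (left_cover V F)"
proof -
  interpret max_matching_graph V F "SOME N. max_matching F N"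
    using max_matching_graph_SOME[OF assms(1,2)] .
  have "left_cover V F = side_cover True"
    by (simp add: left_cover_def side_cover_def odds_def unreach_def evens_def)
  then show ?thesis using card_matching_le_side_cover[OF assms(3,4)] by simp
qed

lemma endpoints_inter_left_cover:
  assumes "\<not> joins_OOU (odds V F) (unreach V F) e" "c \<in> endpoints e" "c \<in> left_cover V F"
  shows "endpoints e \<inter> left_cover V F = {c}"
  using assms by (cases e) (auto simp: joins_OOU_def endpoints_def left_cover_def)

section \<open>Augmentation\<close>

text \<open>The alternating-path argument without paths: a larger matching \<open>X\<close> yields an augmentation of
  \<open>Y\<close> inside \<open>X \<union> Y\<close> that keeps every vertex covered by \<open>Y\<close> covered.\<close>

lemma matching_augmentation:
  assumes "finite X" "finite Y" "is_matching X" "is_matching Y" "card Y < card X"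
  shows "\<exists>Z \<subseteq> X \<union> Y. is_matching Z \<and> card Y < card Z \<and> fst ` Y \<subseteq> fst ` Z \<and> snd ` Y \<subseteq> snd ` Z"
  using assms
proof (induction "card X" arbitrary: X Y rule: less_induct)
  case less
  note X = less.prems(1,3) and Y = less.prems(2,4)
  have "card (fst ` Y) < card (fst ` X)" using card_fst_matching[OF X(2)] card_fst_matching[OF Y(2)] less.prems(5) by simp
  then have "\<not> fst ` X \<subseteq> fst ` Y" using card_mono[OF finite_imageI[OF Y(1)]] by fastforce
  then obtain a q where aq: "(a, q) \<in> X" "a \<notin> fst ` Y" by (metis image_subset_iff prod.collapse)
  show ?case
  proof (cases "q \<in> snd ` Y")
    case False
    have "(a, q) \<notin> Y" using aq(2) by force
    then show ?thesis
      using matching_insert[OF Y(2) aq(2) False] aq(1) Y(1) by (intro exI[of _ "insert (a, q) Y"]) auto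
  next
    case True
    then obtain a' where a'q: "(a', q) \<in> Y" by force
    define X' where "X' = X - {(a, q)}"
    define Y' where "Y' = Y - {(a', q)}"
    have "card X = Suc (card X')" "card Y = Suc (card Y')"
      using card_Suc_Diff1[OF X(1) aq(1)] card_Suc_Diff1[OF Y(1) a'q] by (simp_all add: X'_def Y'_def)
    then have "card X' < card X" "card Y' < card X'" using less.prems(5) by simp_all
    have "finite X'" "finite Y'" using X(1) Y(1) by (simp_all add: X'_def Y'_def)
    have "is_matching X'" "is_matching Y'"
      using matching_subset[OF X(2)] matching_subset[OF Y(2)] by (simp_all add: X'_def Y'_def)
    obtain Z' where Z': "Z' \<subseteq> X' \<union> Y'" "is_matching Z'" "card Y' < card Z'"
      "fst ` Y' \<subseteq> fst ` Z'" "snd ` Y' \<subseteq> snd ` Z'"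
      using less.hyps[OF \<open>card X' < card X\<close> \<open>finite X'\<close> \<open>finite Y'\<close> \<open>is_matching X'\<close>
          \<open>is_matching Y'\<close> \<open>card Y' < card X'\<close>] by blast
    have "a \<notin> fst ` Z'"
    proof
      assume "a \<in> fst ` Z'"
      then obtain q' where "(a, q') \<in> Z'" by auto
      then have "(a, q') \<in> X - {(a, q)} \<or> (a, q') \<in> Y" using Z'(1) by (auto simp: X'_def Y'_def)
      then show False using matching_fst_unique[OF X(2) aq(1)] aq(2) by force
    qed
    have "q \<notin> snd ` Z'"
    proof
      assume "q \<in> snd ` Z'"
      then obtain a'' where "(a'', q) \<in> Z'" by auto
      then have "(a'', q) \<in> X - {(a, q)} \<or> (a'', q) \<in> Y - {(a', q)}" using Z'(1) by (auto simp: X'_def Y'_def)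
      then show False using matching_snd_unique[OF X(2) aq(1)] matching_snd_unique[OF Y(2) a'q] by blast
    qed
    define b where "b = (if a' \<in> fst ` Z' then a else a')"
    define Z where "Z = insert (b, q) Z'"
    have "b \<notin> fst ` Z'" using \<open>a \<notin> fst ` Z'\<close> by (simp add: b_def)
    then have "is_matching Z"
      using matching_insert[OF Z'(2) _ \<open>q \<notin> snd ` Z'\<close>] by (simp add: Z_def)
    moreover have "card Z = Suc (card Z')"
    proof -
      have "finite Z'" using Z'(1) \<open>finite X'\<close> \<open>finite Y'\<close> finite_subset by blast
      moreover have "(b, q) \<notin> Z'" using \<open>b \<notin> fst ` Z'\<close> by force
      ultimately show ?thesis by (simp add: Z_def)
    qed
    moreover have "Z \<subseteq> X \<union> Y" using Z'(1) aq(1) a'q by (auto simp: Z_def X'_def Y'_def b_def)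
    moreover have "fst ` Y \<subseteq> fst ` Z" "snd ` Y \<subseteq> snd ` Z"
      using Z'(4,5) a'q by (force simp: Z_def Y'_def b_def)+
    ultimately show ?thesis using Z'(3) \<open>card Y = Suc (card Y')\<close> by auto
  qed
qed

section \<open>Irving et al.'s algorithm\<close>

text \<open>\<open>irving_edges V E rk s\<close> is the paper's \<open>G'\<close> with index \<open>s + 1\<close>; \<open>irving_rest\<close> holds the
  edges of higher rank that have not been added or deleted yet.\<close>

definition irving_edges :: "('a + 'q) set \<Rightarrow> ('a \<times> 'q) set \<Rightarrow> ('a \<Rightarrow> 'q \<Rightarrow> nat) \<Rightarrow> nat \<Rightarrow> ('a \<times> 'q) set" where
  "irving_edges V E rk s = fst (irving_stage V E rk s)"

definition irving_rest :: "('a + 'q) set \<Rightarrow> ('a \<times> 'q) set \<Rightarrow> ('a \<Rightarrow> 'q \<Rightarrow> nat) \<Rightarrow> nat \<Rightarrow> ('a \<times> 'q) set" where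
  "irving_rest V E rk s = snd (irving_stage V E rk s)"

definition irving_pruned :: "('a + 'q) set \<Rightarrow> ('a \<times> 'q) set \<Rightarrow> ('a \<Rightarrow> 'q \<Rightarrow> nat) \<Rightarrow> nat \<Rightarrow> ('a \<times> 'q) set" where
  "irving_pruned V E rk s = {e \<in> irving_edges V E rk s.
     \<not> joins_OOU (odds V (irving_edges V E rk s)) (unreach V (irving_edges V E rk s)) e}"

definition irving_rest_pruned :: "('a + 'q) set \<Rightarrow> ('a \<times> 'q) set \<Rightarrow> ('a \<Rightarrow> 'q \<Rightarrow> nat) \<Rightarrow> nat \<Rightarrow> ('a \<times> 'q) set" where
  "irving_rest_pruned V E rk s = {e \<in> irving_rest V E rk s. \<not> (Suc s < case_prod rk e \<and>
     incident (odds V (irving_edges V E rk s) \<union> unreach V (irving_edges V E rk s)) e)}"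

lemma irving_edges_0: "irving_edges V E rk 0 = {e \<in> E. case_prod rk e = 1}"
  and irving_rest_0: "irving_rest V E rk 0 = {e \<in> E. 1 < case_prod rk e}"
  by (simp_all add: irving_edges_def irving_rest_def)

lemma irving_edges_Suc:
  "irving_edges V E rk (Suc s) = irving_pruned V E rk s \<union> {e \<in> irving_rest_pruned V E rk s. case_prod rk e = Suc (Suc s)}"
  and irving_rest_Suc:
  "irving_rest V E rk (Suc s) = {e \<in> irving_rest_pruned V E rk s. Suc (Suc s) < case_prod rk e}"
  by (simp_all add: irving_edges_def irving_rest_def irving_pruned_def irving_rest_pruned_def Let_def)

lemma irving_stage_subset: "irving_edges V E rk s \<union> irving_rest V E rk s \<subseteq> E"
  by (induction s)
    (auto simp: irving_edges_0 irving_rest_0 irving_edges_Suc irving_rest_Suc irving_pruned_def irving_rest_pruned_def)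

lemma irving_rest_rank: "e \<in> irving_rest V E rk s \<Longrightarrow> Suc s < case_prod rk e"
  by (cases s) (auto simp: irving_rest_0 irving_rest_Suc irving_rest_pruned_def)

lemma irving_edges_rank: "e \<in> irving_edges V E rk s \<Longrightarrow> case_prod rk e \<le> Suc s"
proof (induction s)
  case (Suc s)
  then show ?case by (auto simp: irving_edges_Suc irving_pruned_def irving_rest_pruned_def)
qed (simp add: irving_edges_0)

lemma irving_edges_low_rank:
  "s \<le> t \<Longrightarrow> e \<in> irving_edges V E rk t \<Longrightarrow> case_prod rk e \<le> Suc s \<Longrightarrow> e \<in> irving_edges V E rk s"
proof (induction t)
  case (Suc t)
  then show ?case
    by (cases "s = Suc t") (auto simp: irving_edges_Suc irving_pruned_def le_Suc_eq)
qed simp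

lemma irving_stage_pruned:
  "s < t \<Longrightarrow> irving_edges V E rk t \<union> irving_rest V E rk t \<subseteq> irving_pruned V E rk s \<union> irving_rest_pruned V E rk s"
proof (induction t)
  case (Suc t)
  have "irving_edges V E rk (Suc t) \<union> irving_rest V E rk (Suc t) \<subseteq> irving_edges V E rk t \<union> irving_rest V E rk t"
    by (auto simp: irving_edges_Suc irving_rest_Suc irving_pruned_def irving_rest_pruned_def)
  with Suc show ?case by (cases "s = t") (auto simp: irving_edges_Suc irving_rest_Suc)
qed simp

lemma irving_edge_at_odd_unreach:
  assumes "s < t" "e \<in> irving_edges V E rk t"
    and "incident (odds V (irving_edges V E rk s) \<union> unreach V (irving_edges V E rk s)) e"
  shows "e \<in> irving_edges V E rk s"
    and "\<not> joins_OOU (odds V (irving_edges V E rk s)) (unreach V (irving_edges V E rk s)) e"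
proof -
  have "e \<in> irving_pruned V E rk s \<union> irving_rest_pruned V E rk s"
    using irving_stage_pruned[OF assms(1)] assms(2) by blast
  moreover have "e \<notin> irving_rest_pruned V E rk s"
    using assms(3) irving_rest_rank[of e V E rk s] by (auto simp: irving_rest_pruned_def)
  ultimately show "e \<in> irving_edges V E rk s"
    and "\<not> joins_OOU (odds V (irving_edges V E rk s)) (unreach V (irving_edges V E rk s)) e"
    by (auto simp: irving_pruned_def)
qed

lemma card_rank_le_Suc:
  "finite X \<Longrightarrow> card {e\<in>X. f e \<le> Suc j} = card {e\<in>X. f e \<le> j} + card {e\<in>X. f e = Suc j}"
  by (subst card_Un_disjoint[symmetric]) (auto intro: arg_cong[where f = card])

lemma card_rank_le_plus_greater: "finite X \<Longrightarrow> card {e\<in>X. f e \<le> (j::nat)} + card {e\<in>X. j < f e} = card X"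
  by (subst card_Un_disjoint[symmetric]) (auto intro: arg_cong[where f = card])

lemma signature_eq_if_cumulative_eq:
  assumes X: "finite X" and Y: "finite Y"
    and eq: "\<And>j. card {e\<in>X. case_prod rk e \<le> j} = card {e\<in>Y. case_prod rk e \<le> j}"
  shows "signature rk X = signature rk Y"
proof
  fix j show "signature rk X j = signature rk Y j"
  proof (cases j)
    case 0
    then show ?thesis using eq[of 0] by (simp add: signature_def)
  next
    case (Suc i)
    then show ?thesis
      using eq[of i] eq[of "Suc i"] card_rank_le_Suc[OF X, of "case_prod rk" i]
        card_rank_le_Suc[OF Y, of "case_prod rk" i]
      by (simp add: signature_def)
  qed
qed

lemma lex_less_if_cumulative_less:
  assumes X: "finite X" and Y: "finite Y"
    and eq: "\<forall>j\<le>K. card {e\<in>X. case_prod rk e \<le> j} = card {e\<in>Y. case_prod rk e \<le> j}"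
    and less: "card {e\<in>X. case_prod rk e \<le> Suc K} < card {e\<in>Y. case_prod rk e \<le> Suc K}"
  shows "lex_less (signature rk X) (signature rk Y)"
proof -
  have "signature rk X j = signature rk Y j" if "j \<le> K" for j
  proof (cases j)
    case 0
    then show ?thesis using eq[rule_format, of 0] by (simp add: signature_def)
  next
    case (Suc i)
    then show ?thesis
      using that eq card_rank_le_Suc[OF X, of "case_prod rk" i] card_rank_le_Suc[OF Y, of "case_prod rk" i]
      by (simp add: signature_def)
  qed
  moreover have "signature rk X (Suc K) < signature rk Y (Suc K)"
    using eq less card_rank_le_Suc[OF X, of "case_prod rk" K] card_rank_le_Suc[OF Y, of "case_prod rk" K]
    by (simp add: signature_def)
  ultimately show ?thesis unfolding lex_less_def by (metis less_Suc_eq_le)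
qed

lemma sum_eq_sum_card_greater:
  fixes f :: "'e \<Rightarrow> nat"
  assumes "finite X" and "\<forall>e\<in>X. f e \<le> R"
  shows "(\<Sum>e\<in>X. f e) = (\<Sum>j<R. card {e\<in>X. j < f e})"
proof -
  have "f e = (\<Sum>j<R. if j < f e then 1 else 0)" if "e \<in> X" for e
  proof -
    have "{j\<in>{..<R}. j < f e} = {..<f e}" using assms(2) that by auto
    then show ?thesis by (simp add: sum.inter_filter[symmetric])
  qed
  then have "(\<Sum>e\<in>X. f e) = (\<Sum>e\<in>X. \<Sum>j<R. if j < f e then 1 else 0)" by (rule sum.cong[OF refl])
  also have "\<dots> = (\<Sum>j<R. \<Sum>e\<in>X. if j < f e then 1 else 0)" by (rule sum.swap)
  also have "\<dots> = (\<Sum>j<R. card {e\<in>X. j < f e})" using assms(1) by (simp add: sum.inter_filter[symmetric])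
  finally show ?thesis .
qed

text \<open>Both \<open>M \<cdot> T\<close> and \<open>M \<cdot> C\<close> are of this form.\<close>

definition reassign :: "('a \<times> 'q) set \<Rightarrow> 'i set \<Rightarrow> ('i \<Rightarrow> 'a) \<Rightarrow> ('i \<Rightarrow> 'q) \<Rightarrow> ('i \<Rightarrow> 'q) \<Rightarrow> ('a \<times> 'q) set" where
  "reassign M I a src dst = (M - (\<lambda>i. (a i, src i)) ` I) \<union> (\<lambda>i. (a i, dst i)) ` I"

context
  fixes M :: "('a \<times> 'q) set" and I :: "'i set" and a :: "'i \<Rightarrow> 'a" and src dst :: "'i \<Rightarrow> 'q"
  assumes M: "is_matching M" and src_inj: "inj_on src I" and dst_inj: "inj_on dst I"
    and src_M: "\<forall>i\<in>I. (a i, src i) \<in> M"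
    and dst_free: "\<forall>i\<in>I. dst i \<in> src ` I \<or> dst i \<notin> snd ` M"
begin

lemma reassign_applicant_inj: "inj_on a I"
proof (rule inj_onI)
  fix i j assume "i \<in> I" "j \<in> I" "a i = a j"
  then have "src i = src j" using src_M matching_fst_unique[OF M] by metis
  then show "i = j" using inj_onD[OF src_inj] \<open>i \<in> I\<close> \<open>j \<in> I\<close> by blast
qed

lemma reassign_kept_edge:
  assumes p: "p \<in> M - (\<lambda>i. (a i, src i)) ` I" and i: "i \<in> I"
  shows "fst p \<noteq> a i" and "snd p \<noteq> dst i"
proof -
  obtain x y where p_eq: "p = (x, y)" by fastforce
  show "fst p \<noteq> a i"
  proof
    assume "fst p = a i"
    then have "y = src i" using p src_M i matching_fst_unique[OF M] by (auto simp: p_eq)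
    then show False using p i \<open>fst p = a i\<close> by (auto simp: p_eq)
  qed
  show "snd p \<noteq> dst i"
  proof
    assume "snd p = dst i"
    then obtain j where j: "j \<in> I" "y = src j" using dst_free i p by (force simp: p_eq)
    then have "x = a j" using p src_M matching_snd_unique[OF M] by (auto simp: p_eq)
    then show False using p j by (auto simp: p_eq)
  qed
qed

lemma matching_reassign: "is_matching (reassign M I a src dst)"
  unfolding reassign_def
proof (rule matching_Un)
  show "is_matching (M - (\<lambda>i. (a i, src i)) ` I)" using matching_subset[OF M] by blast
  show "is_matching ((\<lambda>i. (a i, dst i)) ` I)"
    using inj_on_eq_iff[OF reassign_applicant_inj] inj_on_eq_iff[OF dst_inj]
    by (auto simp: is_matching_def)
  fix x y x' y' assume "(x, y) \<in> M - (\<lambda>i. (a i, src i)) ` I" "(x', y') \<in> (\<lambda>i. (a i, dst i)) ` I"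
  then show "x \<noteq> x' \<and> y \<noteq> y'" using reassign_kept_edge by fastforce
qed

lemma fst_reassign: "fst ` reassign M I a src dst = fst ` M"
proof -
  let ?Rem = "(\<lambda>i. (a i, src i)) ` I" and ?Add = "(\<lambda>i. (a i, dst i)) ` I"
  have "?Rem \<subseteq> M" using src_M by blast
  then have "fst ` M = fst ` (M - ?Rem) \<union> fst ` ?Rem"
    by (simp add: image_Un[symmetric] Un_absorb2)
  moreover have "fst ` ?Rem = a ` I" "fst ` ?Add = a ` I" by (simp_all add: image_image)
  ultimately show ?thesis by (simp add: reassign_def image_Un)
qed

lemma sum_reassign:
  fixes g :: "'a \<times> 'q \<Rightarrow> 'b :: ab_group_add"
  assumes "finite M" "finite I"
  shows "(\<Sum>e\<in>reassign M I a src dst. g e) = (\<Sum>e\<in>M. g e) + (\<Sum>i\<in>I. g (a i, dst i) - g (a i, src i))"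
proof -
  let ?Rem = "(\<lambda>i. (a i, src i)) ` I" and ?Add = "(\<lambda>i. (a i, dst i)) ` I"
  have "(M - ?Rem) \<inter> ?Add = {}" using reassign_kept_edge by fastforce
  then have "(\<Sum>e\<in>reassign M I a src dst. g e) = (\<Sum>e\<in>M - ?Rem. g e) + (\<Sum>e\<in>?Add. g e)"
    using assms by (simp add: reassign_def sum.union_disjoint)
  also have "(\<Sum>e\<in>M - ?Rem. g e) = (\<Sum>e\<in>M. g e) - (\<Sum>e\<in>?Rem. g e)"
    using src_M assms(1) by (intro sum_diff) auto
  also have "(\<Sum>e\<in>?Rem. g e) = (\<Sum>i\<in>I. g (a i, src i))"
    using src_inj by (subst sum.reindex) (auto simp: inj_on_def)
  also have "(\<Sum>e\<in>?Add. g e) = (\<Sum>i\<in>I. g (a i, dst i))"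
    using dst_inj by (subst sum.reindex) (auto simp: inj_on_def)
  finally show ?thesis by (simp add: sum_subtractf)
qed

end

section \<open>Rank-maximal matchings and the reduced graph\<close>

locale rank_maximal_instance =
  fixes A :: "'a set" and P :: "'p set" and E :: "('a \<times> 'p) set"
    and rank :: "'a \<Rightarrow> 'p \<Rightarrow> nat" and r :: nat
    and M :: "('a \<times> ('p + 'a)) set"
  assumes finite_A: "finite A" and finite_P: "finite P" and E_subset: "E \<subseteq> A \<times> P"
    and rank_range: "\<forall>(a, p) \<in> E. 1 \<le> rank a p \<and> rank a p \<le> r"
    and M_rank_maximal: "rank_maximal (ext_edges A E) (ext_rank r rank) M"
begin

abbreviation "posts \<equiv> ext_posts A P"
abbreviation "verts \<equiv> inst_vertices A posts"
abbreviation "edges \<equiv> ext_edges A E"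
abbreviation "rk \<equiv> ext_rank r rank"
abbreviation "rke \<equiv> case_prod rk"
abbreviation "stage s \<equiv> irving_edges verts edges rk s"
abbreviation "rest s \<equiv> irving_rest verts edges rk s"
abbreviation "odd_at s \<equiv> odds verts (stage s)"
abbreviation "unr_at s \<equiv> unreach verts (stage s)"
abbreviation "M_le j \<equiv> {e \<in> M. rke e \<le> j}"
abbreviation "Gr \<equiv> reduced_graph verts edges rk (Suc r)"

lemma edge_mem: "e \<in> edges \<Longrightarrow> fst e \<in> A \<and> snd e \<in> posts"
  using E_subset by (auto simp: ext_edges_def ext_posts_def)

lemma finite_verts: "finite verts"
  using finite_A finite_P by (simp add: inst_vertices_def ext_posts_def)

lemma finite_edges: "finite edges"
  using finite_subset[of edges "A \<times> posts"] edge_mem finite_A finite_P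
  by (force simp: ext_posts_def)

lemma edge_rank: "e \<in> edges \<Longrightarrow> 1 \<le> rke e \<and> rke e \<le> Suc r"
  using rank_range by (auto simp: ext_edges_def)

lemma M_edges: "M \<subseteq> edges" and M_matching: "is_matching M"
  and M_not_improvable: "X \<subseteq> edges \<Longrightarrow> is_matching X \<Longrightarrow> \<not> lex_less (signature rk M) (signature rk X)"
  using M_rank_maximal by (auto simp: rank_maximal_def)

lemma finite_M: "finite M" using M_edges finite_edges finite_subset by blast

lemma M_le_all: "M_le (Suc r) = M" using M_edges edge_rank by fastforce

lemma stage_edges: "stage s \<subseteq> edges" using irving_stage_subset by blast

lemma stage_in_verts: "\<forall>e\<in>stage s. Inl (fst e) \<in> verts \<and> Inr (snd e) \<in> verts"
  using stage_edges edge_mem by (fastforce simp: inst_vertices_def)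

text \<open>The second conjunct says that no edge of \<open>M\<close> has been deleted by stage \<open>s\<close>.\<close>

definition irving_invariant :: "nat \<Rightarrow> bool" where
  "irving_invariant s \<longleftrightarrow> max_matching (stage s) (M_le (Suc s)) \<and> {e \<in> M. Suc s < rke e} \<subseteq> rest s"

lemma invariant_structure:
  assumes "irving_invariant s"
  shows "\<forall>v\<in>odd_at s \<union> unr_at s. matched_in (M_le (Suc s)) v"
    and "\<forall>e\<in>M_le (Suc s). \<not> joins_OOU (odd_at s) (unr_at s) e"
  using max_matching_covers_odds_unreach[OF finite_verts stage_in_verts] assms
  by (auto simp: irving_invariant_def)

lemma high_M_edge_not_incident:
  assumes "irving_invariant s" "e \<in> M" "Suc s < rke e"
  shows "\<not> incident (odd_at s \<union> unr_at s) e"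
proof
  assume "incident (odd_at s \<union> unr_at s) e"
  then obtain v where v: "v \<in> odd_at s \<union> unr_at s" "v \<in> endpoints e"
    by (auto simp: incident_def endpoints_def)
  then have "matched_in (M_le (Suc s)) v" using invariant_structure(1)[OF assms(1)] by blast
  then obtain e' where "e' \<in> M_le (Suc s)" "v \<in> endpoints e'"
    unfolding matched_in_iff_endpoints by blast
  then have "e = e'" using matching_endpoint_unique[OF M_matching assms(2)] \<open>v \<in> endpoints e\<close> by blast
  then show False using assms(3) \<open>e' \<in> M_le (Suc s)\<close> by simp
qed

lemma card_low_part_le:
  assumes "irving_invariant s" "s \<le> t" "X \<subseteq> stage t" "is_matching X"
  shows "card {e \<in> X. rke e \<le> Suc s} \<le> card (M_le (Suc s))"
proof -
  have "{e \<in> X. rke e \<le> Suc s} \<subseteq> stage s"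
    using irving_edges_low_rank[OF assms(2), of _ verts edges rk] assms(3) by blast
  moreover have "is_matching {e \<in> X. rke e \<le> Suc s}" by (rule matching_subset[OF assms(4)]) blast
  moreover have "max_matching (stage s) (M_le (Suc s))" using assms(1) by (simp add: irving_invariant_def)
  ultimately show ?thesis by (simp add: max_matching_def)
qed

lemma card_M_le_le_low_part:
  assumes "irving_invariant s" "s < t" "Z \<subseteq> stage t" "finite Z"
    and covers: "\<forall>v. matched_in (M_le (Suc s)) v \<longrightarrow> matched_in Z v"
  shows "card (M_le (Suc s)) \<le> card {e \<in> Z. rke e \<le> Suc s}"
proof -
  let ?C = "left_cover verts (stage s)"
  have "card (M_le (Suc s)) \<le> card ?C"
    using card_matching_le_left_cover[OF finite_verts stage_in_verts] assms(1)
    by (simp add: irving_invariant_def max_matching_def)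
  also have "card ?C \<le> card {e \<in> Z. rke e \<le> Suc s}"
  proof (rule card_le_private_edges, use assms(4) in simp, intro ballI)
    fix c assume c: "c \<in> ?C"
    then have "c \<in> odd_at s \<union> unr_at s" by (auto simp: left_cover_def)
    then have "matched_in Z c" using invariant_structure(1)[OF assms(1)] covers by blast
    then obtain e where e: "e \<in> Z" "c \<in> endpoints e" unfolding matched_in_iff_endpoints by blast
    have "incident (odd_at s \<union> unr_at s) e"
      using e(2) \<open>c \<in> odd_at s \<union> unr_at s\<close> by (auto simp: incident_def endpoints_def)
    note at_odd = irving_edge_at_odd_unreach[OF assms(2) _ this]
    have "e \<in> stage s" "\<not> joins_OOU (odd_at s) (unr_at s) e"
      using at_odd assms(3) e(1) by blast+
    then have "rke e \<le> Suc s" using irving_edges_rank by blast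
    then show "\<exists>e\<in>{e \<in> Z. rke e \<le> Suc s}. c \<in> endpoints e \<and> endpoints e \<inter> ?C = {c}"
      using e endpoints_inter_left_cover[OF \<open>\<not> joins_OOU _ _ e\<close> e(2) c] by blast
  qed
  finally show ?thesis .
qed

lemma M_le_0: "M_le 0 = {}"
  using M_edges edge_rank by fastforce

lemma low_part_0: "X \<subseteq> edges \<Longrightarrow> {e \<in> X. rke e \<le> 0} = {}"
  using edge_rank by fastforce

text \<open>A matching of \<open>stage t\<close> larger than \<open>M_le (t + 1)\<close> would improve \<open>M\<close>: augmenting
  \<open>M_le (t + 1)\<close> keeps the odd and unreachable vertices of all earlier stages covered, so by the
  invariants the low-rank parts of the augmented matching are as large as those of \<open>M\<close>, while the
  whole is larger.\<close>

lemma M_le_maximum: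
  assumes inv: "\<forall>s<t. irving_invariant s" and M_le_stage: "M_le (Suc t) \<subseteq> stage t"
    and X: "X \<subseteq> stage t" "is_matching X"
  shows "card X \<le> card (M_le (Suc t))"
proof (rule ccontr)
  assume "\<not> ?thesis"
  then have "card (M_le (Suc t)) < card X" by simp
  moreover have "finite X" using finite_subset[OF subset_trans[OF X(1) stage_edges] finite_edges] .
  moreover have "is_matching (M_le (Suc t))" by (rule matching_subset[OF M_matching]) blast
  ultimately obtain Z where Z: "Z \<subseteq> X \<union> M_le (Suc t)" "is_matching Z" "card (M_le (Suc t)) < card Z"
    "fst ` M_le (Suc t) \<subseteq> fst ` Z" "snd ` M_le (Suc t) \<subseteq> snd ` Z"
    using matching_augmentation[of X "M_le (Suc t)"] X(2) finite_M by auto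
  have Z_stage: "Z \<subseteq> stage t" using Z(1) X(1) M_le_stage by blast
  then have "finite Z" using finite_subset[OF subset_trans[OF _ stage_edges] finite_edges] by blast
  have covers: "matched_in Z v" if "matched_in (M_le (Suc s)) v" "s < t" for s v
  proof -
    have "matched_in (M_le (Suc t)) v" using that by (cases v) (fastforce simp: matched_in_def)+
    then show ?thesis using Z(4,5) by (cases v) (force simp: matched_in_def)+
  qed
  have "card {e \<in> Z. rke e \<le> j} = card (M_le j)" if "j \<le> t" for j
  proof (cases j)
    case 0
    have "Z \<subseteq> edges" using Z_stage stage_edges by blast
    then show ?thesis unfolding 0 low_part_0[OF \<open>Z \<subseteq> edges\<close>] M_le_0 by simp
  next
    case (Suc s)
    then have "s < t" "irving_invariant s" using that inv by auto
    then show ?thesis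
      using card_low_part_le[of s t Z] card_M_le_le_low_part[of s t Z] Z_stage Z(2)
        \<open>finite Z\<close> covers Suc
      by fastforce
  qed
  moreover have "{e \<in> Z. rke e \<le> Suc t} = Z"
    using Z_stage irving_edges_rank[of _ verts edges rk t] by blast
  ultimately have "lex_less (signature rk M) (signature rk Z)"
    using lex_less_if_cumulative_less[OF finite_M \<open>finite Z\<close>, of t rk] Z(3) by simp
  then show False using M_not_improvable Z_stage stage_edges Z(2) by blast
qed

lemma invariant_0: "irving_invariant 0"
proof -
  have "M_le (Suc 0) \<subseteq> stage 0" using M_edges edge_rank by (fastforce simp: irving_edges_0)
  moreover have "{e \<in> M. Suc 0 < rke e} \<subseteq> rest 0" using M_edges by (auto simp: irving_rest_0)
  ultimately show ?thesis
    using M_le_maximum[of 0] matching_subset[OF M_matching]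
    by (auto simp: irving_invariant_def max_matching_def)
qed

lemma invariant_Suc:
  assumes inv: "\<forall>s'\<le>s. irving_invariant s'"
  shows "irving_invariant (Suc s)"
proof -
  have inv_s: "irving_invariant s" using inv by blast
  have low: "e \<in> stage (Suc s)" if "e \<in> M" "rke e \<le> Suc s" for e
  proof -
    have "e \<in> M_le (Suc s)" using that by simp
    moreover have "M_le (Suc s) \<subseteq> stage s" using inv_s by (simp add: irving_invariant_def max_matching_def)
    ultimately have "e \<in> stage s" "\<not> joins_OOU (odd_at s) (unr_at s) e"
      using invariant_structure(2)[OF inv_s] by blast+
    then show ?thesis by (simp add: irving_edges_Suc irving_pruned_def)
  qed
  have high: "e \<in> irving_rest_pruned verts edges rk s" if "e \<in> M" "Suc s < rke e" for e
    using that inv_s high_M_edge_not_incident[OF inv_s]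
    by (auto simp: irving_invariant_def irving_rest_pruned_def)
  have "M_le (Suc (Suc s)) \<subseteq> stage (Suc s)"
  proof
    fix e assume "e \<in> M_le (Suc (Suc s))"
    then show "e \<in> stage (Suc s)"
      using low high by (cases "rke e \<le> Suc s") (auto simp: irving_edges_Suc)
  qed
  moreover have "{e \<in> M. Suc (Suc s) < rke e} \<subseteq> rest (Suc s)"
    using high by (auto simp: irving_rest_Suc)
  ultimately show ?thesis
    using M_le_maximum[of "Suc s"] inv matching_subset[OF M_matching]
    by (auto simp: irving_invariant_def max_matching_def less_Suc_eq_le)
qed

lemma invariant: "irving_invariant s"
proof (induction s rule: less_induct)
  case (less s)
  then show ?case using invariant_0 invariant_Suc by (cases s) auto
qed

lemma reduced_graph_eq: "Gr = {e \<in> stage r. \<not> joins_OOU (odd_at r) (unr_at r) e}"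
  by (simp add: reduced_graph_def Gprime_def irving_edges_def)

lemma M_subset_reduced: "M \<subseteq> Gr"
proof -
  have "M_le (Suc r) \<subseteq> stage r" using invariant[of r] by (simp add: irving_invariant_def max_matching_def)
  then show ?thesis
    using invariant_structure(2)[OF invariant] M_le_all reduced_graph_eq by blast
qed

lemma reduced_edges: "Gr \<subseteq> edges" using stage_edges reduced_graph_eq by blast

lemma card_low_part_le_M:
  assumes "X \<subseteq> Gr" "is_matching X"
  shows "card {e \<in> X. rke e \<le> j} \<le> card (M_le j)"
proof -
  have X: "X \<subseteq> stage r" using assms(1) reduced_graph_eq by blast
  have "X \<subseteq> edges" using assms(1) reduced_edges by blast
  show ?thesis
  proof (cases j)
    case 0
    then show ?thesis unfolding 0 low_part_0[OF \<open>X \<subseteq> edges\<close>] by simp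
  next
    case (Suc s)
    show ?thesis
    proof (cases "s \<le> r")
      case True
      then show ?thesis using card_low_part_le[OF invariant True X assms(2)] Suc by simp
    next
      case False
      then have "{e \<in> X. rke e \<le> j} = {e \<in> X. rke e \<le> Suc r}" "M_le j = M_le (Suc r)"
        using \<open>X \<subseteq> edges\<close> M_edges edge_rank Suc by fastforce+
      then show ?thesis using card_low_part_le[OF invariant order_refl X assms(2)] by simp
    qed
  qed
qed

lemma rank_maximal_if_rank_sum_eq:
  assumes X: "X \<subseteq> Gr" "is_matching X" and card: "card X = card M"
    and sum: "(\<Sum>e\<in>X. rke e) = (\<Sum>e\<in>M. rke e)"
  shows "rank_maximal edges rk X"
proof -
  have "X \<subseteq> edges" using X(1) reduced_edges by blast
  then have "finite X" using finite_subset[OF _ finite_edges] by blast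
  define above where "above Y j = card {e \<in> Y. j < rke e}" for Y j
  have split: "card {e \<in> Y. rke e \<le> j} + above Y j = card Y" if "finite Y" for Y j
    using card_rank_le_plus_greater[OF that] by (simp add: above_def)
  have dominated: "above M j \<le> above X j" for j
    using card_low_part_le_M[OF X, of j] split[OF \<open>finite X\<close>, of j] split[OF finite_M, of j] card
    by linarith
  have "\<forall>e\<in>X. rke e \<le> Suc r" "\<forall>e\<in>M. rke e \<le> Suc r"
    using \<open>X \<subseteq> edges\<close> M_edges edge_rank by blast+
  then have sums: "(\<Sum>j<Suc r. above X j) = (\<Sum>j<Suc r. above M j)"
    using sum_eq_sum_card_greater[OF \<open>finite X\<close>] sum_eq_sum_card_greater[OF finite_M] sum
    by (simp add: above_def)
  have "above M j = above X j" for j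
  proof (cases "j < Suc r")
    case True
    then show ?thesis
      using sum_mono_inv[of "above M" "{..<Suc r}" "above X" j] dominated sums
      by simp
  next
    case False
    have none: "{e \<in> Y. j < rke e} = {}" if "Y \<subseteq> edges" for Y
      using that edge_rank False by fastforce
    show ?thesis unfolding above_def none[OF \<open>X \<subseteq> edges\<close>] none[OF M_edges] ..
  qed
  then have "card {e \<in> X. rke e \<le> j} = card (M_le j)" for j
    using split[OF \<open>finite X\<close>, of j] split[OF finite_M, of j] card by (simp add: add_right_cancel)
  then have "signature rk X = signature rk M"
    using signature_eq_if_cumulative_eq[OF \<open>finite X\<close> finite_M] by blast
  then show ?thesis
    using M_rank_maximal \<open>X \<subseteq> edges\<close> X(2) by (simp add: rank_maximal_def)
qed

lemma sink_unmatched: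
  assumes "is_sink A posts edges rk (Suc r) M p"
  shows "p \<notin> snd ` M"
proof
  assume "p \<in> snd ` M"
  then obtain x where "(x, p) \<in> M" by force
  then have "sw_edge M Gr p p" using M_subset_reduced by (auto simp: sw_edge_def)
  then show False using assms by (auto simp: is_sink_def)
qed

lemma rank_maximal_reassign:
  assumes "finite I" "inj_on src I" "inj_on dst I"
    and src_M: "\<forall>i\<in>I. (a i, src i) \<in> M" and dst_Gr: "\<forall>i\<in>I. (a i, dst i) \<in> Gr"
    and dst_free: "\<forall>i\<in>I. dst i \<in> src ` I \<or> dst i \<notin> snd ` M"
    and weight: "(\<Sum>i\<in>I. int (rke (a i, dst i)) - int (rke (a i, src i))) = 0"
  shows "rank_maximal edges rk (reassign M I a src dst)"
proof (rule rank_maximal_if_rank_sum_eq)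
  note data = M_matching assms(2,3) src_M dst_free
  show "reassign M I a src dst \<subseteq> Gr"
    using M_subset_reduced dst_Gr by (auto simp: reassign_def)
  show "is_matching (reassign M I a src dst)" using matching_reassign[OF data] .
  show "card (reassign M I a src dst) = card M"
    using fst_reassign[OF data] card_fst_matching[OF matching_reassign[OF data]] card_fst_matching[OF M_matching]
    by simp
  have "(\<Sum>e\<in>reassign M I a src dst. int (rke e)) = (\<Sum>e\<in>M. int (rke e))"
    using sum_reassign[OF data finite_M assms(1), of "\<lambda>e. int (rke e)"] weight by simp
  then show "(\<Sum>e\<in>reassign M I a src dst. rke e) = (\<Sum>e\<in>M. rke e)"
    by (metis of_nat_eq_iff of_nat_sum)
qed

lemma switching_path_rank_maximal:
  assumes T: "switching_path A posts edges rk (Suc r) M T"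
  shows "rank_maximal edges rk (apply_path M T)"
proof -
  let ?I = "{..<length T - 1}" and ?a = "\<lambda>i. partner M (T ! i)"
  have "distinct T" "T \<noteq> []" using T by (auto simp: switching_path_def)
  have "sw_edge M Gr (T ! i) (T ! Suc i)" if "i \<in> ?I" for i
    using T that by (simp add: switching_path_def)
  note edge = sw_edge_partner[OF M_matching this]
  have "last T \<notin> snd ` M" using T sink_unmatched by (auto simp: switching_path_def)
  then have "T ! Suc i \<in> (!) T ` ?I \<or> T ! Suc i \<notin> snd ` M" if "i \<in> ?I" for i
    using that \<open>T \<noteq> []\<close> by (cases "Suc i = length T - 1") (auto simp: last_conv_nth)
  moreover have "inj_on ((!) T) ?I" "inj_on (\<lambda>i. T ! Suc i) ?I"
    using \<open>distinct T\<close> by (auto simp: inj_on_def nth_eq_iff_index_eq)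
  moreover have "apply_path M T = reassign M ?I ?a ((!) T) (\<lambda>i. T ! Suc i)"
    by (auto simp: apply_path_def reassign_def)
  moreover have "(\<Sum>i\<in>?I. int (rke (?a i, T ! Suc i)) - int (rke (?a i, T ! i))) = 0"
    using T by (simp add: switching_path_def sw_weight_def)
  ultimately show ?thesis using rank_maximal_reassign[of ?I] edge by simp
qed

lemma switching_cycle_rank_maximal:
  assumes C: "switching_cycle A posts edges rk (Suc r) M C"
  shows "rank_maximal edges rk (apply_cycle M C)"
proof -
  let ?I = "{..<length C}" and ?a = "\<lambda>i. partner M (C ! i)" and ?next = "\<lambda>i. C ! (Suc i mod length C)"
  have "distinct C" "C \<noteq> []" using C by (auto simp: switching_cycle_def)
  have "sw_edge M Gr (C ! i) (?next i)" if "i \<in> ?I" for i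
    using C that by (simp add: switching_cycle_def)
  note edge = sw_edge_partner[OF M_matching this]
  have "?next i \<in> (!) C ` ?I" for i using \<open>C \<noteq> []\<close> by simp
  moreover have "inj_on ((!) C) ?I" using \<open>distinct C\<close> by (auto simp: inj_on_def nth_eq_iff_index_eq)
  moreover have "inj_on ?next ?I"
  proof (rule inj_onI)
    fix i j assume "i \<in> ?I" "j \<in> ?I" "?next i = ?next j"
    then have "Suc i mod length C = Suc j mod length C"
      using \<open>distinct C\<close> \<open>C \<noteq> []\<close> by (simp add: nth_eq_iff_index_eq)
    then show "i = j" using \<open>i \<in> ?I\<close> \<open>j \<in> ?I\<close> by (auto simp: mod_Suc split: if_splits)
  qed
  moreover have "apply_cycle M C = reassign M ?I ?a ((!) C) ?next"
    by (auto simp: apply_cycle_def reassign_def)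
  moreover have "(\<Sum>i\<in>?I. int (rke (?a i, ?next i)) - int (rke (?a i, C ! i))) = 0"
    using C by (simp add: switching_cycle_def sw_weight_def)
  ultimately show ?thesis using rank_maximal_reassign[of ?I] edge by simp
qed

end

theorem lemma2:
  fixes A :: "'a set" and P :: "'p set" and E :: "('a \<times> 'p) set"
    and rank :: "'a \<Rightarrow> 'p \<Rightarrow> nat" and r :: nat
    and M :: "('a \<times> ('p + 'a)) set"
  assumes "finite A" and "finite P" and "E \<subseteq> A \<times> P"
    and "\<forall>(a,p) \<in> E. 1 \<le> rank a p \<and> rank a p \<le> r"
    and "rank_maximal (ext_edges A E) (ext_rank r rank) M"
  shows "(\<forall>T. switching_path A (ext_posts A P) (ext_edges A E) (ext_rank r rank) (Suc r) M T
              \<longrightarrow> rank_maximal (ext_edges A E) (ext_rank r rank) (apply_path M T))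
       \<and> (\<forall>C. switching_cycle A (ext_posts A P) (ext_edges A E) (ext_rank r rank) (Suc r) M C
              \<longrightarrow> rank_maximal (ext_edges A E) (ext_rank r rank) (apply_cycle M C))"
proof -
  interpret rank_maximal_instance A P E rank r M using assms by unfold_locales
  show ?thesis using switching_path_rank_maximal switching_cycle_rank_maximal by blast
qed

end
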